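(* Let $V\colon \mathbf{ZZ}\to\mathbf{Vec}$ be a nonzero zigzag persistence module. Then $V$ is indecomposable if and only if $V$ is $[-k,k]$-indecomposable for every integer $k\geq 0$.
   Context: Fix a field $\mathbb{F}$; $\mathbf{Vec}$ denotes the category of finite-dimensional $\mathbb{F}$-vector spaces. $\mathbf{ZZ}$ is the category whose objects are the integers, with non-identity morphisms $i\to i-1$ and $i\to i+1$ for every even integer $i$ (even integers are sources, odd integers are sinks). A zigzag persistence module is a functor $V\colon\mathbf{ZZ}\to\mathbf{Vec}$, i.e. finite-dimensional spaces $V_i$ ($i\in\mathbb{Z}$) together with linear maps $g_i=V(i\to i-1)\colon V_i\to V_{i-1}$ and $f_i=V(i\to i+1)\colon V_i\to V_{i+1}$ for each even $i$. Morphisms are natural transformations. The direct sum $U\oplus W$ is defined pointwise: $(U\oplus W)_i=U_i\oplus W_i$, $(U\oplus W)(\alpha)=U(\alpha)\oplus W(\alpha)$. $V$ is decomposable if $V\cong U\oplus W$ with $U,W$ both nonzero, and indecomposable otherwise. For integers $s\leq t$, a nonzero $W$ is $[s,t]$-indecomposable if for every decomposition $W=W^1\oplus W^2$ (into submodules), either $W^1_i=0$ for all $s\le i\le t$, or $W^2_i=0$ for all $s\le i\le t$. *)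

theory Defs
  imports "Jordan_Normal_Form.Matrix"
begin

text \<open>A zigzag persistence module over a field 'a, in coordinates:
  V_i = 'a^(zdim V i) (column vectors), and for even i the structure maps
  g_i = zg V i : V_i -> V_(i-1) and f_i = zf V i : V_i -> V_(i+1) are matrices.
  The values of zg, zf at odd i are irrelevant (never used).\<close>

record 'a zz =
  zdim :: "int \<Rightarrow> nat"
  zg :: "int \<Rightarrow> 'a mat"
  zf :: "int \<Rightarrow> 'a mat"

definition zz_module :: "('a::field) zz \<Rightarrow> bool" where
  "zz_module V \<longleftrightarrow> (\<forall>i. even i \<longrightarrow>
      zg V i \<in> carrier_mat (zdim V (i - 1)) (zdim V i) \<and>
      zf V i \<in> carrier_mat (zdim V (i + 1)) (zdim V i))"

definition zz_zero :: "('a::field) zz \<Rightarrow> bool" where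
  "zz_zero V \<longleftrightarrow> (\<forall>i. zdim V i = 0)"

definition zz_hom :: "('a::field) zz \<Rightarrow> 'a zz \<Rightarrow> (int \<Rightarrow> 'a mat) \<Rightarrow> bool" where
  "zz_hom V W \<phi> \<longleftrightarrow> (\<forall>i. \<phi> i \<in> carrier_mat (zdim W i) (zdim V i)) \<and>
     (\<forall>i. even i \<longrightarrow> \<phi> (i - 1) * zg V i = zg W i * \<phi> i \<and>
                     \<phi> (i + 1) * zf V i = zf W i * \<phi> i)"

definition zz_iso :: "('a::field) zz \<Rightarrow> 'a zz \<Rightarrow> bool" where
  "zz_iso V W \<longleftrightarrow> (\<exists>\<phi> \<psi>. zz_hom V W \<phi> \<and> zz_hom W V \<psi> \<and>
     (\<forall>i. \<psi> i * \<phi> i = 1\<^sub>m (zdim V i) \<and> \<phi> i * \<psi> i = 1\<^sub>m (zdim W i)))"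

definition zz_sum :: "('a::field) zz \<Rightarrow> 'a zz \<Rightarrow> 'a zz" where
  "zz_sum U W = \<lparr> zdim = (\<lambda>i. zdim U i + zdim W i),
     zg = (\<lambda>i. four_block_mat (zg U i) (0\<^sub>m (zdim U (i - 1)) (zdim W i))
                              (0\<^sub>m (zdim W (i - 1)) (zdim U i)) (zg W i)),
     zf = (\<lambda>i. four_block_mat (zf U i) (0\<^sub>m (zdim U (i + 1)) (zdim W i))
                              (0\<^sub>m (zdim W (i + 1)) (zdim U i)) (zf W i)) \<rparr>"

definition zz_decomposable :: "('a::field) zz \<Rightarrow> bool" where
  "zz_decomposable V \<longleftrightarrow> (\<exists>U W. zz_module U \<and> zz_module W \<and>
      \<not> zz_zero U \<and> \<not> zz_zero W \<and> zz_iso V (zz_sum U W))"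

definition zz_indecomposable :: "('a::field) zz \<Rightarrow> bool" where
  "zz_indecomposable V \<longleftrightarrow> \<not> zz_decomposable V"

definition is_subspace :: "nat \<Rightarrow> ('a::field) vec set \<Rightarrow> bool" where
  "is_subspace n S \<longleftrightarrow> S \<subseteq> carrier_vec n \<and> 0\<^sub>v n \<in> S \<and>
     (\<forall>u\<in>S. \<forall>w\<in>S. u + w \<in> S) \<and> (\<forall>c. \<forall>u\<in>S. c \<cdot>\<^sub>v u \<in> S)"

definition zz_submodule :: "('a::field) zz \<Rightarrow> (int \<Rightarrow> 'a vec set) \<Rightarrow> bool" where
  "zz_submodule V S \<longleftrightarrow> (\<forall>i. is_subspace (zdim V i) (S i)) \<and>
     (\<forall>i. even i \<longrightarrow> (\<forall>v\<in>S i. zg V i *\<^sub>v v \<in> S (i - 1) \<and> zf V i *\<^sub>v v \<in> S (i + 1)))"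

definition zz_internal_decomp :: "('a::field) zz \<Rightarrow> (int \<Rightarrow> 'a vec set) \<Rightarrow> (int \<Rightarrow> 'a vec set) \<Rightarrow> bool" where
  "zz_internal_decomp V S1 S2 \<longleftrightarrow> zz_submodule V S1 \<and> zz_submodule V S2 \<and>
     (\<forall>i. S1 i \<inter> S2 i = {0\<^sub>v (zdim V i)} \<and>
          (\<forall>x\<in>carrier_vec (zdim V i). \<exists>u\<in>S1 i. \<exists>w\<in>S2 i. x = u + w))"

definition zz_interval_indecomposable :: "('a::field) zz \<Rightarrow> int \<Rightarrow> int \<Rightarrow> bool" where
  "zz_interval_indecomposable V s t \<longleftrightarrow> \<not> zz_zero V \<and>
     (\<forall>S1 S2. zz_internal_decomp V S1 S2 \<longrightarrow>
        (\<forall>i\<in>{s..t}. S1 i = {0\<^sub>v (zdim V i)}) \<or> (\<forall>i\<in>{s..t}. S2 i = {0\<^sub>v (zdim V i)}))"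

end

theory Submission
  imports Defs "Jordan_Normal_Form.Determinant"
begin

text \<open>Decompositions of a zigzag module \<open>V\<close>, external (\<open>V \<cong> U \<oplus> W\<close>) as well as internal
  (\<open>V = S\<^sub>1 \<oplus> S\<^sub>2\<close> into submodules), are the same thing as idempotent endomorphisms \<open>E\<close> of \<open>V\<close>:
  \<open>S\<^sub>1\<close>, \<open>S\<^sub>2\<close> are the fixed vectors and the kernel of \<open>E\<close>, \<open>E\<^sub>i\<close> is the projection onto \<open>S\<^sub>1\<^sub>,\<^sub>i\<close> along
  \<open>S\<^sub>2\<^sub>,\<^sub>i\<close>, and the external summands are obtained from rank factorizations \<open>E\<^sub>i = B\<^sub>i C\<^sub>i\<close>,
  \<open>C\<^sub>i B\<^sub>i = 1\<close>, of \<open>E\<close> and \<open>1 - E\<close>. Such a decomposition is nontrivial iff \<open>E\<^sub>i \<noteq> 0\<close> for some \<open>i\<close>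
  and \<open>E\<^sub>j \<noteq> 1\<close> for some \<open>j\<close>, and both indices lie in \<open>[-k, k]\<close> for \<open>k = max |i| |j|\<close>.\<close>

section \<open>Block matrices and rank factorizations of idempotents\<close>

definition append_cols :: "'a::zero mat \<Rightarrow> 'a mat \<Rightarrow> 'a mat" (infixr \<open>@\<^sub>c\<close> 65) where
  "A @\<^sub>c B = four_block_mat A B (0\<^sub>m 0 (dim_col A)) (0\<^sub>m 0 (dim_col B))"

lemma carrier_append_cols[simp, intro]:
  "A \<in> carrier_mat n nc1 \<Longrightarrow> B \<in> carrier_mat n nc2 \<Longrightarrow> A @\<^sub>c B \<in> carrier_mat n (nc1 + nc2)"
  unfolding append_cols_def by auto

lemma four_block_mat_zero_dim:
  assumes "A \<in> carrier_mat nr nc" and "D \<in> carrier_mat 0 0"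
  shows "four_block_mat A B C D = A"
  using assms by (intro eq_matI) auto

lemma minus_zero_mat[simp]: "A \<in> carrier_mat nr nc \<Longrightarrow> A - 0\<^sub>m nr nc = (A :: 'a::group_add mat)"
  by (intro eq_matI) auto

lemma minus_eq_zero_matD:
  fixes A B :: "'a::group_add mat"
  assumes "A \<in> carrier_mat nr nc" and "B \<in> carrier_mat nr nc" and "A - B = 0\<^sub>m nr nc"
  shows "B = A"
proof (rule eq_matI)
  fix i j assume "i < dim_row A" "j < dim_col A"
  then have ij: "i < nr" "j < nc" using assms(1) by auto
  have "(A - B) $$ (i, j) = 0\<^sub>m nr nc $$ (i, j)" using assms(3) by simp
  then show "B $$ (i, j) = A $$ (i, j)" using assms(1,2) ij by simp
qed (use assms in auto)

lemma mult_zero_dim_mat: "B \<in> carrier_mat n 0 \<Longrightarrow> C \<in> carrier_mat 0 m \<Longrightarrow> B * C = (0\<^sub>m n m :: 'a::semiring_0 mat)"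
  by (intro eq_matI) (auto simp: scalar_prod_def)

lemma mult_append_cols:
  fixes M :: "'a::semiring_0 mat"
  assumes M: "M \<in> carrier_mat nr n" and A: "A \<in> carrier_mat n nc1" and B: "B \<in> carrier_mat n nc2"
  shows "M * (A @\<^sub>c B) = (M * A) @\<^sub>c (M * B)"
proof -
  have "M * (A @\<^sub>c B) = four_block_mat M (0\<^sub>m nr 0) (0\<^sub>m 0 n) (0\<^sub>m 0 0) * (A @\<^sub>c B)"
    using four_block_mat_zero_dim[OF M, of "0\<^sub>m 0 0"] by simp
  also have "\<dots> = (M * A) @\<^sub>c (M * B)"
    unfolding append_cols_def using M A B by (subst mult_four_block_mat) auto
  finally show ?thesis .
qed

lemma append_rows_mult:
  fixes M :: "'a::semiring_0 mat"
  assumes A: "A \<in> carrier_mat nr1 n" and B: "B \<in> carrier_mat nr2 n" and M: "M \<in> carrier_mat n nc"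
  shows "(A @\<^sub>r B) * M = (A * M) @\<^sub>r (B * M)"
proof -
  have "(A @\<^sub>r B) * M = (A @\<^sub>r B) * four_block_mat M (0\<^sub>m n 0) (0\<^sub>m 0 nc) (0\<^sub>m 0 0)"
    using four_block_mat_zero_dim[OF M, of "0\<^sub>m 0 0"] by simp
  also have "\<dots> = (A * M) @\<^sub>r (B * M)"
    unfolding append_rows_def using M A B by (subst mult_four_block_mat) auto
  finally show ?thesis .
qed

lemma append_rows_mult_append_cols:
  fixes C1 :: "'a::semiring_0 mat"
  assumes "C1 \<in> carrier_mat nr1 n" "C2 \<in> carrier_mat nr2 n" "B1 \<in> carrier_mat n nc1" "B2 \<in> carrier_mat n nc2"
  shows "(C1 @\<^sub>r C2) * (B1 @\<^sub>c B2) = four_block_mat (C1 * B1) (C1 * B2) (C2 * B1) (C2 * B2)"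
  unfolding append_rows_def append_cols_def using assms by (subst mult_four_block_mat) auto

lemma append_cols_mult_append_rows:
  fixes B1 :: "'a::semiring_0 mat"
  assumes "B1 \<in> carrier_mat n r1" "B2 \<in> carrier_mat n r2" "C1 \<in> carrier_mat r1 nc" "C2 \<in> carrier_mat r2 nc"
  shows "(B1 @\<^sub>c B2) * (C1 @\<^sub>r C2) = B1 * C1 + B2 * C2"
  unfolding append_rows_def append_cols_def using assms
  by (subst mult_four_block_mat) (auto intro: four_block_mat_zero_dim)

lemma mult_four_block_diag_mat:
  fixes A1 :: "'a::semiring_0 mat"
  assumes "A1 \<in> carrier_mat nr1 n1" "D1 \<in> carrier_mat nr2 n2" "A2 \<in> carrier_mat n1 nc1" "D2 \<in> carrier_mat n2 nc2"
  shows "four_block_mat A1 (0\<^sub>m nr1 n2) (0\<^sub>m nr2 n1) D1 * four_block_mat A2 (0\<^sub>m n1 nc2) (0\<^sub>m n2 nc1) D2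
    = four_block_mat (A1 * A2) (0\<^sub>m nr1 nc2) (0\<^sub>m nr2 nc1) (D1 * D2)"
  using assms by (subst mult_four_block_mat) auto

lemma four_block_diag_mult_append_rows:
  fixes X :: "'a::semiring_0 mat"
  assumes "X \<in> carrier_mat nr1 r1" "Y \<in> carrier_mat nr2 r2" "C1 \<in> carrier_mat r1 n" "C2 \<in> carrier_mat r2 n"
  shows "four_block_mat X (0\<^sub>m nr1 r2) (0\<^sub>m nr2 r1) Y * (C1 @\<^sub>r C2) = (X * C1) @\<^sub>r (Y * C2)"
  unfolding append_rows_def using assms by (subst mult_four_block_mat) auto

lemma append_cols_mult_four_block_diag:
  fixes X :: "'a::semiring_0 mat"
  assumes "B1 \<in> carrier_mat n r1" "B2 \<in> carrier_mat n r2" "X \<in> carrier_mat r1 nc1" "Y \<in> carrier_mat r2 nc2"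
  shows "(B1 @\<^sub>c B2) * four_block_mat X (0\<^sub>m r1 nc2) (0\<^sub>m r2 nc1) Y = (B1 * X) @\<^sub>c (B2 * Y)"
  unfolding append_cols_def using assms by (subst mult_four_block_mat) auto

lemma left_inverse_mat_dim_le:
  fixes B C :: "'a::field mat"
  assumes B: "B \<in> carrier_mat n k" and C: "C \<in> carrier_mat k n" and CB: "C * B = 1\<^sub>m k"
  shows "k \<le> n"
proof (rule ccontr)
  assume "\<not> k \<le> n"
  \<comment> \<open>Padded to square matrices, \<open>C\<close> would be a two-sided inverse of \<open>B\<close>, which has zero rows.\<close>
  then obtain m where k: "k = n + m" and m: "m > 0" by (metis less_imp_add_positive not_le)
  define B' where "B' = B @\<^sub>r 0\<^sub>m m k"
  define C' where "C' = C @\<^sub>c 0\<^sub>m k m"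
  have B': "B' \<in> carrier_mat k k" and C': "C' \<in> carrier_mat k k"
    unfolding B'_def C'_def using B C k by auto
  have "C' * B' = 1\<^sub>m k"
    unfolding B'_def C'_def
    by (subst append_cols_mult_append_rows[OF C zero_carrier_mat B zero_carrier_mat]) (use CB in simp)
  then have "B' * C' = 1\<^sub>m k" using mat_mult_left_right_inverse[OF C' B'] by simp
  moreover have "(B' * C') $$ (k - 1, k - 1) = 0"
    unfolding B'_def C'_def
    by (subst append_rows_mult_append_cols[OF B zero_carrier_mat C zero_carrier_mat]) (use B C k m in simp)
  ultimately show False using m k by simp
qed

lemma idempotent_mat_rank_one_summand:
  fixes F :: "'a::field mat"
  assumes F: "F \<in> carrier_mat n n" and FF: "F * F = F" and F0: "F \<noteq> 0\<^sub>m n n"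
  obtains b c where "b \<in> carrier_mat n 1" "c \<in> carrier_mat 1 n"
    "F * b = b" "c * F = c" "c * b = 1\<^sub>m 1"
proof -
  obtain r0 c0 where rc: "r0 < n" "c0 < n" and x: "F $$ (r0, c0) \<noteq> 0"
    using F F0 by (metis carrier_matD eq_matI index_zero_mat(1,2,3))
  define x where "x = F $$ (r0, c0)"
  define b where "b = mat n 1 (\<lambda>(i, j). F $$ (i, c0))"
  define c where "c = mat 1 n (\<lambda>(i, j). F $$ (r0, j) / x)"
  have b: "b \<in> carrier_mat n 1" and c: "c \<in> carrier_mat 1 n" unfolding b_def c_def by auto
  have colb: "col b 0 = col F c0" using F rc unfolding b_def by (intro eq_vecI) auto
  have rowc: "row c 0 = (1 / x) \<cdot>\<^sub>v row F r0" using F rc unfolding c_def by (intro eq_vecI) auto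
  have FFe: "row F i \<bullet> col F j = F $$ (i, j)" if "i < n" "j < n" for i j
    using F FF that by (metis carrier_matD index_mult_mat(1))
  have "F * b = b"
  proof (rule eq_matI)
    fix i j assume "i < dim_row b" "j < dim_col b"
    then show "(F * b) $$ (i, j) = b $$ (i, j)"
      using F b colb FFe[OF _ rc(2)] by (simp add: b_def)
  qed (use F b in auto)
  moreover have "c * F = c"
  proof (rule eq_matI)
    fix i j assume "i < dim_row c" "j < dim_col c"
    then have i: "i = 0" and j: "j < n" using c by auto
    have "row c 0 \<bullet> col F j = (1 / x) * (row F r0 \<bullet> col F j)"
      unfolding rowc using F j rc by (intro smult_scalar_prod_distrib[of _ n]) auto
    then show "(c * F) $$ (i, j) = c $$ (i, j)"
      using i j F c FFe[OF rc(1) j] by (simp add: c_def)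
  qed (use F c in auto)
  moreover have "c * b = 1\<^sub>m 1"
  proof (rule eq_matI)
    have "row c 0 \<bullet> col b 0 = (1 / x) * (row F r0 \<bullet> col F c0)"
      unfolding rowc colb using F rc by (intro smult_scalar_prod_distrib[of _ n]) auto
    also have "\<dots> = 1" using FFe[OF rc] x by (simp add: x_def)
    finally show "(c * b) $$ (i, j) = 1\<^sub>m 1 $$ (i, j)" if "i < dim_row (1\<^sub>m 1)" "j < dim_col (1\<^sub>m 1)" for i j
      using that b c by simp
  qed (use b c in auto)
  ultimately show ?thesis using that b c by blast
qed

lemma idempotent_mat_minus_sub_idempotent:
  fixes E :: "'a::field mat"
  assumes E: "E \<in> carrier_mat n n" and EE: "E * E = E"
    and B: "B \<in> carrier_mat n k" and C: "C \<in> carrier_mat k n" and CB: "C * B = 1\<^sub>m k"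
    and EB: "E * B = B" and CE: "C * E = C"
  defines "F \<equiv> E - B * C"
  shows "F * F = F" and "E * F = F" and "F * E = F" and "F * B = 0\<^sub>m n k" and "C * F = 0\<^sub>m k n"
proof -
  have BCc: "B * C \<in> carrier_mat n n" using B C by simp
  have F: "F \<in> carrier_mat n n" unfolding F_def using E BCc by (simp add: minus_carrier_mat)
  have EBC: "E * (B * C) = B * C" using assoc_mult_mat[OF E B C] EB by simp
  have BCE: "(B * C) * E = B * C" using assoc_mult_mat[OF B C E] CE by simp
  have BCBC: "(B * C) * (B * C) = B * C"
    using assoc_mult_mat[OF B C BCc] assoc_mult_mat[OF C B C] CB C by simp
  show EF: "E * F = F" and "F * E = F"
    unfolding F_def using mult_minus_distrib_mat[OF E E BCc] minus_mult_distrib_mat[OF E BCc E]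
      EE EBC BCE by simp_all
  show "F * F = F"
    using minus_mult_distrib_mat[OF E BCc F] EF
      mult_minus_distrib_mat[OF BCc E BCc] BCE BCBC BCc E by (simp add: F_def minus_carrier_mat)
  show "F * B = 0\<^sub>m n k"
    unfolding F_def using minus_mult_distrib_mat[OF E BCc B] assoc_mult_mat[OF B C B] CB EB B
    by simp
  show "C * F = 0\<^sub>m k n"
    unfolding F_def using mult_minus_distrib_mat[OF C E BCc] assoc_mult_mat[OF C B C] CB CE C
    by (simp flip: assoc_mult_mat[OF C B C])
qed

text \<open>A rank-one summand of the idempotent \<open>E - B * C\<close> enlarges the factorization by one column.\<close>

lemma idempotent_mat_factor_step:
  fixes E :: "'a::field mat"
  assumes E: "E \<in> carrier_mat n n" and EE: "E * E = E"
    and B: "B \<in> carrier_mat n k" and C: "C \<in> carrier_mat k n" and CB: "C * B = 1\<^sub>m k"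
    and EB: "E * B = B" and CE: "C * E = C" and BC: "B * C \<noteq> E"
  obtains B' C' where "B' \<in> carrier_mat n (Suc k)" "C' \<in> carrier_mat (Suc k) n"
    "C' * B' = 1\<^sub>m (Suc k)" "E * B' = B'" "C' * E = C'"
proof -
  define F where "F = E - B * C"
  have F: "F \<in> carrier_mat n n" unfolding F_def using mult_carrier_mat[OF B C] by (rule minus_carrier_mat)
  note F_props = idempotent_mat_minus_sub_idempotent[OF E EE B C CB EB CE, folded F_def]
  have "F \<noteq> 0\<^sub>m n n" using minus_eq_zero_matD[OF E mult_carrier_mat[OF B C]] BC unfolding F_def by blast
  then obtain b c where b: "b \<in> carrier_mat n 1" and c: "c \<in> carrier_mat 1 n"
    and Fb: "F * b = b" and cF: "c * F = c" and cb: "c * b = 1\<^sub>m 1"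
    using idempotent_mat_rank_one_summand[OF F F_props(1)] by blast
  have Cb: "C * b = 0\<^sub>m k 1" using assoc_mult_mat[OF C F b] F_props(5) Fb b by simp
  have cB: "c * B = 0\<^sub>m 1 k" using assoc_mult_mat[OF c F B] F_props(4) cF c by simp
  have Eb: "E * b = b" using assoc_mult_mat[OF E F b] F_props(2) Fb by simp
  have cE: "c * E = c" using assoc_mult_mat[OF c F E] F_props(3) cF by simp
  show ?thesis
  proof (rule that[of "B @\<^sub>c b" "C @\<^sub>r c"])
    show "B @\<^sub>c b \<in> carrier_mat n (Suc k)" "C @\<^sub>r c \<in> carrier_mat (Suc k) n"
      using B C b c by (metis Suc_eq_plus1 carrier_append_cols carrier_append_rows)+
    show "(C @\<^sub>r c) * (B @\<^sub>c b) = 1\<^sub>m (Suc k)"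
      using append_rows_mult_append_cols[OF C c B b] CB Cb cB cb by simp
    show "E * (B @\<^sub>c b) = B @\<^sub>c b" using mult_append_cols[OF E B b] EB Eb by simp
    show "(C @\<^sub>r c) * E = C @\<^sub>r c" using append_rows_mult[OF C c E] CE cE by simp
  qed
qed

lemma idempotent_mat_factor:
  fixes E :: "'a::field mat"
  assumes E: "E \<in> carrier_mat n n" and EE: "E * E = E"
  obtains r B C where "B \<in> carrier_mat n r" "C \<in> carrier_mat r n" "C * B = 1\<^sub>m r" "B * C = E"
proof -
  have "\<exists>r B C. B \<in> carrier_mat n r \<and> C \<in> carrier_mat r n \<and> C * B = 1\<^sub>m r \<and> B * C = E"
    if "B \<in> carrier_mat n k" "C \<in> carrier_mat k n" "C * B = 1\<^sub>m k" "E * B = B" "C * E = C"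
    for k B C
    using that
  proof (induction "n - k" arbitrary: k B C rule: less_induct)
    case less
    show ?case
    proof (cases "B * C = E")
      case False
      obtain B' C' where B': "B' \<in> carrier_mat n (Suc k)" and C': "C' \<in> carrier_mat (Suc k) n"
        and inv: "C' * B' = 1\<^sub>m (Suc k)" and "E * B' = B'" "C' * E = C'"
        using idempotent_mat_factor_step[OF E EE less.prems False] by blast
      moreover have "n - Suc k < n - k" using left_inverse_mat_dim_le[OF B' C' inv] by simp
      ultimately show ?thesis using less.hyps by blast
    qed (use less.prems in blast)
  qed
  from this[of "0\<^sub>m n 0" 0 "0\<^sub>m 0 n"] show ?thesis
    using that E by fastforce
qed

section \<open>Subspaces and projections\<close>

lemma mat_eq_by_mult_vec:
  fixes A B :: "'a::semiring_1 mat"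
  assumes A: "A \<in> carrier_mat nr nc" and B: "B \<in> carrier_mat nr nc"
    and eq: "\<And>v. v \<in> carrier_vec nc \<Longrightarrow> A *\<^sub>v v = B *\<^sub>v v"
  shows "A = B"
proof (rule eq_matI)
  fix i j assume "i < dim_row B" "j < dim_col B"
  then have i: "i < nr" and j: "j < nc" using B by auto
  have "A $$ (i, j) = (A *\<^sub>v unit_vec nc j) $ i" using A i j by simp
  also have "\<dots> = (B *\<^sub>v unit_vec nc j) $ i" using eq[of "unit_vec nc j"] by simp
  also have "\<dots> = B $$ (i, j)" using B i j by simp
  finally show "A $$ (i, j) = B $$ (i, j)" .
qed (use A B in auto)

lemma mult_mat_zero_vec[simp]: "A \<in> carrier_mat nr nc \<Longrightarrow> A *\<^sub>v 0\<^sub>v nc = (0\<^sub>v nr :: 'a::semiring_0 vec)"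
  by (intro eq_vecI) auto

lemma zero_mat_mult_vec[simp]: "v \<in> carrier_vec nc \<Longrightarrow> 0\<^sub>m nr nc *\<^sub>v v = (0\<^sub>v nr :: 'a::semiring_0 vec)"
  by (intro eq_vecI) auto

lemma is_subspaceD:
  assumes "is_subspace n S"
  shows "S \<subseteq> carrier_vec n" "0\<^sub>v n \<in> S" "\<And>u w. u \<in> S \<Longrightarrow> w \<in> S \<Longrightarrow> u + w \<in> S"
    "\<And>a u. u \<in> S \<Longrightarrow> a \<cdot>\<^sub>v u \<in> S"
  using assms unfolding is_subspace_def by blast+

lemma is_subspace_diff:
  fixes S :: "'a::field vec set"
  assumes S: "is_subspace n S" and u: "u \<in> S" and w: "w \<in> S"
  shows "u - w \<in> S"
proof -
  have "u - w = u + (-1) \<cdot>\<^sub>v w"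
    using u w is_subspaceD(1)[OF S] by (intro eq_vecI) auto
  then show ?thesis using is_subspaceD(3,4)[OF S] u w by simp
qed

lemma is_subspace_fixed_vecs:
  fixes E :: "'a::field mat"
  assumes "E \<in> carrier_mat n n"
  shows "is_subspace n {v \<in> carrier_vec n. E *\<^sub>v v = v}"
  unfolding is_subspace_def using assms
  by (auto simp: mult_add_distrib_mat_vec[OF assms] mult_mat_vec[OF assms])

lemma is_subspace_kernel:
  fixes E :: "'a::field mat"
  assumes "E \<in> carrier_mat n n"
  shows "is_subspace n {v \<in> carrier_vec n. E *\<^sub>v v = 0\<^sub>v n}"
  unfolding is_subspace_def using assms
  by (auto simp: mult_add_distrib_mat_vec[OF assms] mult_mat_vec[OF assms])

lemma mult_mat_vec_in_subspace:
  fixes M :: "'a::field mat"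
  assumes S: "is_subspace nr S" and M: "M \<in> carrier_mat nr nc"
    and cols: "\<And>j. j < nc \<Longrightarrow> col M j \<in> S" and v: "v \<in> carrier_vec nc"
  shows "M *\<^sub>v v \<in> S"
proof -
  define trunc where "trunc m = vec nc (\<lambda>j. if j < m then v $ j else 0)" for m
  have "M *\<^sub>v trunc m \<in> S" if "m \<le> nc" for m
    using that
  proof (induction m)
    case 0
    have "trunc 0 = 0\<^sub>v nc" unfolding trunc_def by (intro eq_vecI) auto
    then show ?case using is_subspaceD(2)[OF S] M by simp
  next
    case (Suc m)
    then have m: "m < nc" by simp
    have "trunc (Suc m) = trunc m + v $ m \<cdot>\<^sub>v unit_vec nc m"
      unfolding trunc_def using m by (intro eq_vecI) (auto simp: less_Suc_eq)
    moreover have "M *\<^sub>v unit_vec nc m = col M m" using M m by (intro eq_vecI) auto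
    ultimately have "M *\<^sub>v trunc (Suc m) = M *\<^sub>v trunc m + v $ m \<cdot>\<^sub>v col M m"
      using M by (simp add: mult_add_distrib_mat_vec[OF M] mult_mat_vec[OF M] trunc_def)
    then show ?case using Suc is_subspaceD(3,4)[OF S] cols[OF m] by simp
  qed
  moreover have "trunc nc = v" unfolding trunc_def using v by (intro eq_vecI) auto
  ultimately show ?thesis by force
qed

lemma minus_eq_zero_vec_iff:
  fixes u w :: "'a::ab_group_add vec"
  assumes "u \<in> carrier_vec n" and "w \<in> carrier_vec n"
  shows "u - w = 0\<^sub>v n \<longleftrightarrow> w = u"
proof
  assume "u - w = 0\<^sub>v n"
  then have "(u - w) $ i = 0" if "i < n" for i using that by simp
  then show "w = u" using assms by (intro eq_vecI) auto
qed (use assms in auto)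

definition is_projection :: "nat \<Rightarrow> 'a::field vec set \<Rightarrow> 'a vec set \<Rightarrow> 'a mat \<Rightarrow> bool" where
  "is_projection n A B P \<longleftrightarrow> P \<in> carrier_mat n n \<and>
     (\<forall>v \<in> carrier_vec n. P *\<^sub>v v \<in> A \<and> v - P *\<^sub>v v \<in> B)"

lemma projection_exists:
  fixes A B :: "'a::field vec set"
  assumes A: "is_subspace n A" and B: "is_subspace n B"
    and sum: "\<forall>x \<in> carrier_vec n. \<exists>u \<in> A. \<exists>w \<in> B. x = u + w"
  obtains P where "is_projection n A B P"
proof -
  have "\<forall>j. \<exists>p. j < n \<longrightarrow> fst p \<in> A \<and> snd p \<in> B \<and> unit_vec n j = fst p + snd p"
    using sum unit_vec_carrier by fastforce
  from choice[OF this] obtain p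
    where p: "\<forall>j. j < n \<longrightarrow> fst (p j) \<in> A \<and> snd (p j) \<in> B \<and> unit_vec n j = fst (p j) + snd (p j)"
    by blast
  define u where "u j = fst (p j)" for j
  define w where "w j = snd (p j)" for j
  have uw: "\<And>j. j < n \<Longrightarrow> u j \<in> A \<and> w j \<in> B \<and> unit_vec n j = u j + w j"
    using p unfolding u_def w_def by blast
  have u: "u j \<in> carrier_vec n" and w: "w j \<in> carrier_vec n" if "j < n" for j
    using uw[OF that] is_subspaceD(1)[OF A] is_subspaceD(1)[OF B] by auto
  define P where "P = mat n n (\<lambda>(i, j). u j $ i)"
  define Q where "Q = mat n n (\<lambda>(i, j). w j $ i)"
  have P: "P \<in> carrier_mat n n" and Q: "Q \<in> carrier_mat n n" unfolding P_def Q_def by auto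
  have "col P j = u j" "col Q j = w j" if "j < n" for j
    using u[OF that] w[OF that] that unfolding P_def Q_def by (auto intro!: eq_vecI)
  then have PA: "P *\<^sub>v v \<in> A" and QB: "Q *\<^sub>v v \<in> B" if "v \<in> carrier_vec n" for v
    using mult_mat_vec_in_subspace[OF A P _ that] mult_mat_vec_in_subspace[OF B Q _ that] uw by auto
  have "P + Q = 1\<^sub>m n"
  proof (rule eq_matI)
    fix i j assume "i < dim_row (1\<^sub>m n :: 'a mat)" "j < dim_col (1\<^sub>m n :: 'a mat)"
    then have i: "i < n" and j: "j < n" by auto
    have "unit_vec n j $ i = u j $ i + w j $ i" using uw[OF j] i u[OF j] w[OF j] by simp
    then show "(P + Q) $$ (i, j) = 1\<^sub>m n $$ (i, j)" using i j by (simp add: P_def Q_def)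
  qed (use P Q in auto)
  have "v - P *\<^sub>v v = Q *\<^sub>v v" if v: "v \<in> carrier_vec n" for v
  proof (rule eq_vecI)
    fix i assume "i < dim_vec (Q *\<^sub>v v)"
    then have i: "i < n" using Q by simp
    have "v = P *\<^sub>v v + Q *\<^sub>v v"
      using add_mult_distrib_mat_vec[OF P Q v] \<open>P + Q = 1\<^sub>m n\<close> v by simp
    then have "v $ i = (P *\<^sub>v v + Q *\<^sub>v v) $ i" by (rule arg_cong)
    then have "v $ i = (P *\<^sub>v v) $ i + (Q *\<^sub>v v) $ i" using i P Q by simp
    then show "(v - P *\<^sub>v v) $ i = (Q *\<^sub>v v) $ i" using v i P by simp
  qed (use v P Q in simp)
  then have "is_projection n A B P" using P PA QB unfolding is_projection_def by auto
  then show ?thesis by (rule that)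
qed

context
  fixes n :: nat and A B :: "'a::field vec set" and P :: "'a mat"
  assumes A: "is_subspace n A" and B: "is_subspace n B" and AB: "A \<inter> B = {0\<^sub>v n}"
    and P: "is_projection n A B P"
begin

lemma projection_fixes: "u \<in> A \<Longrightarrow> P *\<^sub>v u = u"
proof -
  assume u: "u \<in> A"
  have uc: "u \<in> carrier_vec n" using u is_subspaceD(1)[OF A] by auto
  have "u - P *\<^sub>v u \<in> A" using is_subspace_diff[OF A u] P uc unfolding is_projection_def by blast
  moreover have "u - P *\<^sub>v u \<in> B" using P uc unfolding is_projection_def by blast
  ultimately have "u - P *\<^sub>v u = 0\<^sub>v n" using AB by blast
  moreover have "P *\<^sub>v u \<in> carrier_vec n" using uc P unfolding is_projection_def by auto
  ultimately show "P *\<^sub>v u = u" using uc by (metis minus_eq_zero_vec_iff)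
qed

lemma projection_kills: "w \<in> B \<Longrightarrow> P *\<^sub>v w = 0\<^sub>v n"
proof -
  assume w: "w \<in> B"
  have wc: "w \<in> carrier_vec n" using w is_subspaceD(1)[OF B] by auto
  have PwA: "P *\<^sub>v w \<in> A" and QwB: "w - P *\<^sub>v w \<in> B"
    using P wc unfolding is_projection_def by blast+
  have "P *\<^sub>v w \<in> carrier_vec n" using PwA is_subspaceD(1)[OF A] by auto
  then have "P *\<^sub>v w = w - (w - P *\<^sub>v w)" using wc by (intro eq_vecI) auto
  then have "P *\<^sub>v w \<in> B" using is_subspace_diff[OF B w QwB] by simp
  then show "P *\<^sub>v w = 0\<^sub>v n" using PwA AB by blast
qed

lemma projection_idempotent: "P * P = P"
proof -
  have Pc: "P \<in> carrier_mat n n" using P unfolding is_projection_def by blast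
  show ?thesis
  proof (rule mat_eq_by_mult_vec[OF mult_carrier_mat[OF Pc Pc] Pc])
    fix v :: "'a vec" assume "v \<in> carrier_vec n"
    then have "P *\<^sub>v (P *\<^sub>v v) = P *\<^sub>v v"
      using projection_fixes P unfolding is_projection_def by blast
    then show "(P * P) *\<^sub>v v = P *\<^sub>v v" using Pc \<open>v \<in> carrier_vec n\<close> by simp
  qed
qed

end

lemma projection_intertwines:
  fixes P P' h :: "'a::field mat"
  assumes P: "is_projection n A B P"
    and P': "is_projection n' A' B' P'" and A': "is_subspace n' A'" and B': "is_subspace n' B'"
    and A'B': "A' \<inter> B' = {0\<^sub>v n'}"
    and h: "h \<in> carrier_mat n' n" and hA: "\<And>u. u \<in> A \<Longrightarrow> h *\<^sub>v u \<in> A'"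
    and hB: "\<And>w. w \<in> B \<Longrightarrow> h *\<^sub>v w \<in> B'"
  shows "P' * h = h * P"
proof -
  have Pc: "P \<in> carrier_mat n n" and P'c: "P' \<in> carrier_mat n' n'"
    using P P' unfolding is_projection_def by blast+
  show ?thesis
  proof (rule mat_eq_by_mult_vec[OF mult_carrier_mat[OF P'c h] mult_carrier_mat[OF h Pc]])
    fix v :: "'a vec" assume v: "v \<in> carrier_vec n"
    have Pv: "P *\<^sub>v v \<in> A" and Qv: "v - P *\<^sub>v v \<in> B" using P v unfolding is_projection_def by blast+
    have Pvc: "P *\<^sub>v v \<in> carrier_vec n" using Pc v by simp
    have Qvc: "v - P *\<^sub>v v \<in> carrier_vec n" using Pvc v by simp
    have "v = P *\<^sub>v v + (v - P *\<^sub>v v)" using v Pvc Pc by (intro eq_vecI) auto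
    then have "h *\<^sub>v v = h *\<^sub>v (P *\<^sub>v v) + h *\<^sub>v (v - P *\<^sub>v v)"
      using mult_add_distrib_mat_vec[OF h Pvc Qvc] by simp
    also have "P' *\<^sub>v \<dots> = P' *\<^sub>v (h *\<^sub>v (P *\<^sub>v v)) + P' *\<^sub>v (h *\<^sub>v (v - P *\<^sub>v v))"
      using mult_add_distrib_mat_vec[OF P'c] h Pvc Qvc by simp
    also have "\<dots> = h *\<^sub>v (P *\<^sub>v v)"
      using projection_fixes[OF A' B' A'B' P' hA[OF Pv]] projection_kills[OF A' B' A'B' P' hB[OF Qv]]
        h Pvc by simp
    finally have "P' *\<^sub>v (h *\<^sub>v v) = h *\<^sub>v (P *\<^sub>v v)" .
    then show "(P' * h) *\<^sub>v v = (h * P) *\<^sub>v v" using P'c h Pc v by simp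
  qed
qed

lemma idempotent_mat_is_projection:
  fixes E :: "'a::field mat"
  assumes E: "E \<in> carrier_mat n n" and EE: "E * E = E"
  shows "is_projection n {v \<in> carrier_vec n. E *\<^sub>v v = v} {v \<in> carrier_vec n. E *\<^sub>v v = 0\<^sub>v n} E"
  unfolding is_projection_def
proof (intro conjI ballI)
  fix v :: "'a vec" assume v: "v \<in> carrier_vec n"
  have EEv: "E *\<^sub>v (E *\<^sub>v v) = E *\<^sub>v v" using EE E v by (simp flip: assoc_mult_mat_vec)
  then show "E *\<^sub>v v \<in> {v \<in> carrier_vec n. E *\<^sub>v v = v}" using E v by simp
  have "E *\<^sub>v (v - E *\<^sub>v v) = E *\<^sub>v v - E *\<^sub>v (E *\<^sub>v v)"
    using mult_minus_distrib_mat_vec[OF E v] E v by simp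
  then show "v - E *\<^sub>v v \<in> {v \<in> carrier_vec n. E *\<^sub>v v = 0\<^sub>v n}" using EEv E v by simp
qed (fact E)

lemma fixed_vecs_inter_kernel:
  fixes E :: "'a::field mat"
  assumes "E \<in> carrier_mat n n"
  shows "{v \<in> carrier_vec n. E *\<^sub>v v = v} \<inter> {v \<in> carrier_vec n. E *\<^sub>v v = 0\<^sub>v n} = {0\<^sub>v n}"
  using assms by auto

lemma projection_onto_zero:
  fixes P :: "'a::field mat"
  assumes "is_projection n {0\<^sub>v n} B P"
  shows "P = 0\<^sub>m n n"
proof -
  have Pc: "P \<in> carrier_mat n n" using assms unfolding is_projection_def by blast
  show ?thesis
    by (rule mat_eq_by_mult_vec[OF Pc zero_carrier_mat]) (use assms in \<open>simp add: is_projection_def\<close>)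
qed

lemma projection_along_zero:
  fixes P :: "'a::field mat"
  assumes P: "is_projection n A {0\<^sub>v n} P"
  shows "P = 1\<^sub>m n"
proof -
  have Pc: "P \<in> carrier_mat n n" using P unfolding is_projection_def by blast
  show ?thesis
  proof (rule mat_eq_by_mult_vec[OF Pc one_carrier_mat])
    fix v :: "'a vec" assume v: "v \<in> carrier_vec n"
    then have "v - P *\<^sub>v v = 0\<^sub>v n" using P unfolding is_projection_def by blast
    then show "P *\<^sub>v v = 1\<^sub>m n *\<^sub>v v" using v Pc minus_eq_zero_vec_iff[OF v] by simp
  qed
qed

lemma idempotent_mat_eq_zero_if_no_fixed_vecs:
  fixes E :: "'a::field mat"
  assumes "E \<in> carrier_mat n n" "E * E = E" "{v \<in> carrier_vec n. E *\<^sub>v v = v} = {0\<^sub>v n}"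
  shows "E = 0\<^sub>m n n"
  using projection_onto_zero idempotent_mat_is_projection[OF assms(1,2)] assms(3) by metis

lemma idempotent_mat_eq_one_if_trivial_kernel:
  fixes E :: "'a::field mat"
  assumes "E \<in> carrier_mat n n" "E * E = E" "{v \<in> carrier_vec n. E *\<^sub>v v = 0\<^sub>v n} = {0\<^sub>v n}"
  shows "E = 1\<^sub>m n"
  using projection_along_zero idempotent_mat_is_projection[OF assms(1,2)] assms(3) by metis

section \<open>Idempotent endomorphisms of zigzag modules\<close>

lemma mult_intertwines:
  fixes g :: "'a::semiring_0 mat"
  assumes \<phi>: "\<phi> \<in> carrier_mat nw nv" and \<phi>': "\<phi>' \<in> carrier_mat nw' nv'"
    and g: "g \<in> carrier_mat nv' nv" and g': "g' \<in> carrier_mat nw' nw"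
    and \<psi>: "\<psi> \<in> carrier_mat nu nw" and \<psi>': "\<psi>' \<in> carrier_mat nu' nw'" and g'': "g'' \<in> carrier_mat nu' nu"
    and \<phi>g: "\<phi>' * g = g' * \<phi>" and \<psi>g: "\<psi>' * g' = g'' * \<psi>"
  shows "(\<psi>' * \<phi>') * g = g'' * (\<psi> * \<phi>)"
proof -
  have "(\<psi>' * \<phi>') * g = \<psi>' * (g' * \<phi>)" using assoc_mult_mat[OF \<psi>' \<phi>' g] \<phi>g by simp
  also have "\<dots> = (g'' * \<psi>) * \<phi>" using assoc_mult_mat[OF \<psi>' g' \<phi>] \<psi>g by simp
  also have "\<dots> = g'' * (\<psi> * \<phi>)" using assoc_mult_mat[OF g'' \<psi> \<phi>] .
  finally show ?thesis .
qed

lemma zz_moduleD: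
  assumes "zz_module V" and "even i"
  shows "zg V i \<in> carrier_mat (zdim V (i - 1)) (zdim V i)"
    and "zf V i \<in> carrier_mat (zdim V (i + 1)) (zdim V i)"
  using assms unfolding zz_module_def by auto

lemma zz_homD:
  assumes "zz_hom V W \<phi>"
  shows "\<phi> i \<in> carrier_mat (zdim W i) (zdim V i)"
    and "even i \<Longrightarrow> \<phi> (i - 1) * zg V i = zg W i * \<phi> i"
    and "even i \<Longrightarrow> \<phi> (i + 1) * zf V i = zf W i * \<phi> i"
  using assms unfolding zz_hom_def by auto

lemma zz_hom_comp:
  assumes U: "zz_module U" and V: "zz_module V" and W: "zz_module W"
    and \<phi>: "zz_hom U V \<phi>" and \<psi>: "zz_hom V W \<psi>"
  shows "zz_hom U W (\<lambda>i. \<psi> i * \<phi> i)"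
  unfolding zz_hom_def
proof (intro conjI allI impI)
  note \<phi>c = zz_homD(1)[OF \<phi>] and \<psi>c = zz_homD(1)[OF \<psi>]
  show "\<psi> i * \<phi> i \<in> carrier_mat (zdim W i) (zdim U i)" for i
    by (rule mult_carrier_mat[OF \<psi>c \<phi>c])
  fix i :: int assume i: "even i"
  show "\<psi> (i - 1) * \<phi> (i - 1) * zg U i = zg W i * (\<psi> i * \<phi> i)"
    by (rule mult_intertwines[OF \<phi>c \<phi>c zz_moduleD(1)[OF U i] zz_moduleD(1)[OF V i]
          \<psi>c \<psi>c zz_moduleD(1)[OF W i] zz_homD(2)[OF \<phi> i] zz_homD(2)[OF \<psi> i]])
  show "\<psi> (i + 1) * \<phi> (i + 1) * zf U i = zf W i * (\<psi> i * \<phi> i)"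
    by (rule mult_intertwines[OF \<phi>c \<phi>c zz_moduleD(2)[OF U i] zz_moduleD(2)[OF V i]
          \<psi>c \<psi>c zz_moduleD(2)[OF W i] zz_homD(3)[OF \<phi> i] zz_homD(3)[OF \<psi> i]])
qed

definition zz_idempotent :: "('a::field) zz \<Rightarrow> (int \<Rightarrow> 'a mat) \<Rightarrow> bool" where
  "zz_idempotent V E \<longleftrightarrow> zz_hom V V E \<and> (\<forall>i. E i * E i = E i)"

lemma one_minus_intertwines:
  fixes E :: "'a::ring_1 mat"
  assumes "E \<in> carrier_mat n n" "E' \<in> carrier_mat n' n'" "g \<in> carrier_mat n' n" "E' * g = g * E"
  shows "(1\<^sub>m n' - E') * g = g * (1\<^sub>m n - E)"
  using assms minus_mult_distrib_mat[OF one_carrier_mat, of E' n' g n]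
    mult_minus_distrib_mat[OF assms(3) one_carrier_mat assms(1)] by simp

lemma idempotent_mat_mult_one_minus:
  fixes E :: "'a::ring_1 mat"
  assumes E: "E \<in> carrier_mat n n" and EE: "E * E = E"
  shows "E * (1\<^sub>m n - E) = 0\<^sub>m n n" and "(1\<^sub>m n - E) * E = 0\<^sub>m n n"
  using mult_minus_distrib_mat[OF E one_carrier_mat E] minus_mult_distrib_mat[OF one_carrier_mat E E] E EE
  by simp_all

lemma one_minus_idempotent_mat:
  fixes E :: "'a::ring_1 mat"
  assumes E: "E \<in> carrier_mat n n" and EE: "E * E = E"
  shows "(1\<^sub>m n - E) * (1\<^sub>m n - E) = 1\<^sub>m n - E"
  using minus_mult_distrib_mat[OF one_carrier_mat E, of "1\<^sub>m n - E" n]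
    idempotent_mat_mult_one_minus(1)[OF E EE] E by (simp add: minus_carrier_mat)

lemma zz_idempotent_one_minus:
  assumes V: "zz_module V" and E: "zz_idempotent V E"
  shows "zz_idempotent V (\<lambda>i. 1\<^sub>m (zdim V i) - E i)"
proof -
  have hom: "zz_hom V V E" and EE: "\<And>i. E i * E i = E i"
    using E unfolding zz_idempotent_def by auto
  note Ec = zz_homD(1)[OF hom]
  show ?thesis
    unfolding zz_idempotent_def zz_hom_def
    using Ec one_minus_idempotent_mat[OF Ec EE]
      one_minus_intertwines[OF Ec Ec zz_moduleD(1)[OF V] zz_homD(2)[OF hom]]
      one_minus_intertwines[OF Ec Ec zz_moduleD(2)[OF V] zz_homD(3)[OF hom]]
    by (simp add: minus_carrier_mat)
qed

lemma zz_idempotent_factor: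
  assumes "zz_idempotent V E"
  obtains r B C where "\<And>i. B i \<in> carrier_mat (zdim V i) (r i)" "\<And>i. C i \<in> carrier_mat (r i) (zdim V i)"
    "\<And>i. C i * B i = 1\<^sub>m (r i)" "\<And>i. B i * C i = E i"
proof -
  have "\<exists>r B C. B \<in> carrier_mat (zdim V i) r \<and> C \<in> carrier_mat r (zdim V i) \<and>
      C * B = 1\<^sub>m r \<and> B * C = E i" for i
    using assms zz_homD(1) unfolding zz_idempotent_def
    by (blast intro: idempotent_mat_factor)
  then show ?thesis using that by metis
qed

lemma zz_internal_decomp_fixed_kernel:
  assumes V: "zz_module V" and E: "zz_idempotent V E"
  defines "S1 \<equiv> \<lambda>i. {v \<in> carrier_vec (zdim V i). E i *\<^sub>v v = v}"
    and "S2 \<equiv> \<lambda>i. {v \<in> carrier_vec (zdim V i). E i *\<^sub>v v = 0\<^sub>v (zdim V i)}"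
  shows "zz_internal_decomp V S1 S2"
proof -
  have hom: "zz_hom V V E" and EE: "\<And>i. E i * E i = E i"
    using E unfolding zz_idempotent_def by auto
  note Ec = zz_homD(1)[OF hom]
  have commute: "E i' *\<^sub>v (h *\<^sub>v x) = h *\<^sub>v (E i *\<^sub>v x)"
    if h: "h \<in> carrier_mat (zdim V i') (zdim V i)" and "E i' * h = h * E i"
      and x: "x \<in> carrier_vec (zdim V i)" for i i' h x
    using assoc_mult_mat_vec[OF Ec h x] assoc_mult_mat_vec[OF h Ec x] that by simp
  have maps1: "h *\<^sub>v v \<in> S1 i'"
    if h: "h \<in> carrier_mat (zdim V i') (zdim V i)" and c: "E i' * h = h * E i" and "v \<in> S1 i"
    for i i' h v
    using that commute[OF h c] unfolding S1_def by auto
  have maps2: "h *\<^sub>v w \<in> S2 i'"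
    if h: "h \<in> carrier_mat (zdim V i') (zdim V i)" and c: "E i' * h = h * E i" and "w \<in> S2 i"
    for i i' h w
    using that commute[OF h c] unfolding S2_def by auto
  have subspace: "is_subspace (zdim V i) (S1 i)" "is_subspace (zdim V i) (S2 i)" for i
    unfolding S1_def S2_def using is_subspace_fixed_vecs[OF Ec] is_subspace_kernel[OF Ec] by auto
  have sub: "zz_submodule V S1" "zz_submodule V S2"
    unfolding zz_submodule_def
    using subspace
      maps1[OF zz_moduleD(1)[OF V] zz_homD(2)[OF hom]] maps1[OF zz_moduleD(2)[OF V] zz_homD(3)[OF hom]]
      maps2[OF zz_moduleD(1)[OF V] zz_homD(2)[OF hom]] maps2[OF zz_moduleD(2)[OF V] zz_homD(3)[OF hom]]
    by simp_all
  have "\<exists>u\<in>S1 i. \<exists>w\<in>S2 i. x = u + w" if x: "x \<in> carrier_vec (zdim V i)" for i x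
  proof -
    have "E i *\<^sub>v x \<in> S1 i" "x - E i *\<^sub>v x \<in> S2 i"
      using idempotent_mat_is_projection[OF Ec EE] x unfolding is_projection_def S1_def S2_def by blast+
    moreover have "x = E i *\<^sub>v x + (x - E i *\<^sub>v x)" using x Ec[of i] by (intro eq_vecI) auto
    ultimately show ?thesis by blast
  qed
  then show ?thesis
    unfolding zz_internal_decomp_def using sub fixed_vecs_inter_kernel[OF Ec]
    unfolding S1_def S2_def by blast
qed

lemma zz_internal_decomp_of_idempotent:
  assumes V: "zz_module V" and E: "zz_idempotent V E"
  obtains S1 S2 where "zz_internal_decomp V S1 S2"
    "\<And>i. S1 i = {0\<^sub>v (zdim V i)} \<Longrightarrow> E i = 0\<^sub>m (zdim V i) (zdim V i)"
    "\<And>i. S2 i = {0\<^sub>v (zdim V i)} \<Longrightarrow> E i = 1\<^sub>m (zdim V i)"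
proof -
  have Ec: "E i \<in> carrier_mat (zdim V i) (zdim V i)" and EE: "E i * E i = E i" for i
    using E zz_homD(1) unfolding zz_idempotent_def by blast+
  show ?thesis
    by (rule that[OF zz_internal_decomp_fixed_kernel[OF V E]])
      (use idempotent_mat_eq_zero_if_no_fixed_vecs[OF Ec EE] idempotent_mat_eq_one_if_trivial_kernel[OF Ec EE]
        in blast)+
qed

lemma zz_idempotent_of_internal_decomp:
  assumes V: "zz_module V" and D: "zz_internal_decomp V S1 S2"
  obtains E where "zz_idempotent V E"
    "\<And>i. E i = 0\<^sub>m (zdim V i) (zdim V i) \<Longrightarrow> S1 i = {0\<^sub>v (zdim V i)}"
    "\<And>i. E i = 1\<^sub>m (zdim V i) \<Longrightarrow> S2 i = {0\<^sub>v (zdim V i)}"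
proof -
  have S1: "is_subspace (zdim V i) (S1 i)" and S2: "is_subspace (zdim V i) (S2 i)"
    and S12: "S1 i \<inter> S2 i = {0\<^sub>v (zdim V i)}"
    and sum: "\<forall>x \<in> carrier_vec (zdim V i). \<exists>u \<in> S1 i. \<exists>w \<in> S2 i. x = u + w" for i
    using D unfolding zz_internal_decomp_def zz_submodule_def by auto
  have maps: "v \<in> S1 i \<Longrightarrow> zg V i *\<^sub>v v \<in> S1 (i - 1)" "v \<in> S1 i \<Longrightarrow> zf V i *\<^sub>v v \<in> S1 (i + 1)"
    "v \<in> S2 i \<Longrightarrow> zg V i *\<^sub>v v \<in> S2 (i - 1)" "v \<in> S2 i \<Longrightarrow> zf V i *\<^sub>v v \<in> S2 (i + 1)"
    if "even i" for i v
    using D that unfolding zz_internal_decomp_def zz_submodule_def by auto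
  have "\<forall>i. \<exists>P. is_projection (zdim V i) (S1 i) (S2 i) P"
    using projection_exists[OF S1 S2 sum] by metis
  then obtain E where E: "\<And>i. is_projection (zdim V i) (S1 i) (S2 i) (E i)" by metis
  note Ec = E[unfolded is_projection_def, THEN conjunct1]
  have "zz_idempotent V E"
    unfolding zz_idempotent_def zz_hom_def
    using Ec projection_idempotent[OF S1 S2 S12 E]
      projection_intertwines[OF E E S1 S2 S12 zz_moduleD(1)[OF V]]
      projection_intertwines[OF E E S1 S2 S12 zz_moduleD(2)[OF V]] maps
    by simp
  moreover have "S1 i = {0\<^sub>v (zdim V i)}" if "E i = 0\<^sub>m (zdim V i) (zdim V i)" for i
    using projection_fixes[OF S1 S2 S12 E] is_subspaceD(1,2)[OF S1] that by fastforce
  moreover have "S2 i = {0\<^sub>v (zdim V i)}" if "E i = 1\<^sub>m (zdim V i)" for i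
    using projection_kills[OF S1 S2 S12 E] is_subspaceD(1,2)[OF S2] that by fastforce
  ultimately show ?thesis using that by blast
qed

section \<open>Direct sums and retracts\<close>

lemma append_rows_intertwines:
  fixes g :: "'a::semiring_0 mat"
  assumes "C1 \<in> carrier_mat r1 n" "C2 \<in> carrier_mat r2 n" "C1' \<in> carrier_mat r1' n'" "C2' \<in> carrier_mat r2' n'"
    "g \<in> carrier_mat n' n" "X \<in> carrier_mat r1' r1" "Y \<in> carrier_mat r2' r2"
    and "C1' * g = X * C1" and "C2' * g = Y * C2"
  shows "(C1' @\<^sub>r C2') * g = four_block_mat X (0\<^sub>m r1' r2) (0\<^sub>m r2' r1) Y * (C1 @\<^sub>r C2)"
  using assms by (simp add: append_rows_mult four_block_diag_mult_append_rows)

lemma append_cols_intertwines: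
  fixes g :: "'a::semiring_0 mat"
  assumes "B1 \<in> carrier_mat n r1" "B2 \<in> carrier_mat n r2" "B1' \<in> carrier_mat n' r1'" "B2' \<in> carrier_mat n' r2'"
    "g \<in> carrier_mat n' n" "X \<in> carrier_mat r1' r1" "Y \<in> carrier_mat r2' r2"
    and "B1' * X = g * B1" and "B2' * Y = g * B2"
  shows "(B1' @\<^sub>c B2') * four_block_mat X (0\<^sub>m r1' r2) (0\<^sub>m r2' r1) Y = g * (B1 @\<^sub>c B2)"
  using assms by (simp add: append_cols_mult_four_block_diag mult_append_cols)

lemma zz_sum_simps[simp]:
  "zdim (zz_sum U W) i = zdim U i + zdim W i"
  "zg (zz_sum U W) i = four_block_mat (zg U i) (0\<^sub>m (zdim U (i - 1)) (zdim W i))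
     (0\<^sub>m (zdim W (i - 1)) (zdim U i)) (zg W i)"
  "zf (zz_sum U W) i = four_block_mat (zf U i) (0\<^sub>m (zdim U (i + 1)) (zdim W i))
     (0\<^sub>m (zdim W (i + 1)) (zdim U i)) (zf W i)"
  unfolding zz_sum_def by simp_all

lemma zz_module_sum: "zz_module U \<Longrightarrow> zz_module W \<Longrightarrow> zz_module (zz_sum U W)"
  unfolding zz_module_def by auto

lemma zz_hom_append_rows:
  assumes V: "zz_module V" and U: "zz_module U" and W: "zz_module W"
    and C1: "zz_hom V U C1" and C2: "zz_hom V W C2"
  shows "zz_hom V (zz_sum U W) (\<lambda>i. C1 i @\<^sub>r C2 i)"
  unfolding zz_hom_def zz_sum_simps
proof (intro conjI allI impI)
  note c = zz_homD(1)[OF C1] zz_homD(1)[OF C2]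
  show "C1 i @\<^sub>r C2 i \<in> carrier_mat (zdim U i + zdim W i) (zdim V i)" for i
    using c by blast
  fix i :: int assume i: "even i"
  show "(C1 (i - 1) @\<^sub>r C2 (i - 1)) * zg V i = four_block_mat (zg U i) (0\<^sub>m (zdim U (i - 1)) (zdim W i))
     (0\<^sub>m (zdim W (i - 1)) (zdim U i)) (zg W i) * (C1 i @\<^sub>r C2 i)"
    by (rule append_rows_intertwines[OF c c zz_moduleD(1)[OF V i] zz_moduleD(1)[OF U i]
          zz_moduleD(1)[OF W i] zz_homD(2)[OF C1 i] zz_homD(2)[OF C2 i]])
  show "(C1 (i + 1) @\<^sub>r C2 (i + 1)) * zf V i = four_block_mat (zf U i) (0\<^sub>m (zdim U (i + 1)) (zdim W i))
     (0\<^sub>m (zdim W (i + 1)) (zdim U i)) (zf W i) * (C1 i @\<^sub>r C2 i)"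
    by (rule append_rows_intertwines[OF c c zz_moduleD(2)[OF V i] zz_moduleD(2)[OF U i]
          zz_moduleD(2)[OF W i] zz_homD(3)[OF C1 i] zz_homD(3)[OF C2 i]])
qed

lemma zz_hom_append_cols:
  assumes V: "zz_module V" and U: "zz_module U" and W: "zz_module W"
    and B1: "zz_hom U V B1" and B2: "zz_hom W V B2"
  shows "zz_hom (zz_sum U W) V (\<lambda>i. B1 i @\<^sub>c B2 i)"
  unfolding zz_hom_def zz_sum_simps
proof (intro conjI allI impI)
  note c = zz_homD(1)[OF B1] zz_homD(1)[OF B2]
  show "B1 i @\<^sub>c B2 i \<in> carrier_mat (zdim V i) (zdim U i + zdim W i)" for i
    using c by blast
  fix i :: int assume i: "even i"
  show "(B1 (i - 1) @\<^sub>c B2 (i - 1)) * four_block_mat (zg U i) (0\<^sub>m (zdim U (i - 1)) (zdim W i))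
     (0\<^sub>m (zdim W (i - 1)) (zdim U i)) (zg W i) = zg V i * (B1 i @\<^sub>c B2 i)"
    by (rule append_cols_intertwines[OF c c zz_moduleD(1)[OF V i] zz_moduleD(1)[OF U i]
          zz_moduleD(1)[OF W i] zz_homD(2)[OF B1 i] zz_homD(2)[OF B2 i]])
  show "(B1 (i + 1) @\<^sub>c B2 (i + 1)) * four_block_mat (zf U i) (0\<^sub>m (zdim U (i + 1)) (zdim W i))
     (0\<^sub>m (zdim W (i + 1)) (zdim U i)) (zf W i) = zf V i * (B1 i @\<^sub>c B2 i)"
    by (rule append_cols_intertwines[OF c c zz_moduleD(2)[OF V i] zz_moduleD(2)[OF U i]
          zz_moduleD(2)[OF W i] zz_homD(3)[OF B1 i] zz_homD(3)[OF B2 i]])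
qed

lemma first_block_projection_intertwines:
  fixes X :: "'a::semiring_1 mat"
  assumes "X \<in> carrier_mat a' a" and "Y \<in> carrier_mat b' b"
  shows "four_block_mat (1\<^sub>m a') (0\<^sub>m a' b') (0\<^sub>m b' a') (0\<^sub>m b' b') * four_block_mat X (0\<^sub>m a' b) (0\<^sub>m b' a) Y
    = four_block_mat X (0\<^sub>m a' b) (0\<^sub>m b' a) Y * four_block_mat (1\<^sub>m a) (0\<^sub>m a b) (0\<^sub>m b a) (0\<^sub>m b b)"
  using assms by (simp add: mult_four_block_diag_mat)

lemma zz_idempotent_sum_first:
  assumes U: "zz_module U" and W: "zz_module W"
  shows "zz_idempotent (zz_sum U W)
    (\<lambda>i. four_block_mat (1\<^sub>m (zdim U i)) (0\<^sub>m (zdim U i) (zdim W i)) (0\<^sub>m (zdim W i) (zdim U i))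
      (0\<^sub>m (zdim W i) (zdim W i)))"
  unfolding zz_idempotent_def zz_hom_def zz_sum_simps
  using first_block_projection_intertwines[OF zz_moduleD(1)[OF U] zz_moduleD(1)[OF W]]
    first_block_projection_intertwines[OF zz_moduleD(2)[OF U] zz_moduleD(2)[OF W]]
  by (simp add: mult_four_block_diag_mat)

lemma retract_intertwines:
  fixes g :: "'a::semiring_1 mat"
  assumes B: "B \<in> carrier_mat n r" and C: "C \<in> carrier_mat r n" and CB: "C * B = 1\<^sub>m r"
    and B': "B' \<in> carrier_mat n' r'" and C': "C' \<in> carrier_mat r' n'" and CB': "C' * B' = 1\<^sub>m r'"
    and g: "g \<in> carrier_mat n' n" and c: "(B' * C') * g = g * (B * C)"
  shows "B' * (C' * g * B) = g * B" and "(C' * g * B) * C = C' * g"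
proof -
  have C'g: "C' * g \<in> carrier_mat r' n" and gB: "g * B \<in> carrier_mat n' r" using C' B g by auto
  have "B' * (C' * g * B) = ((B' * C') * g) * B"
    using assoc_mult_mat[OF B' C'g B] assoc_mult_mat[OF B' C' g] by simp
  also have "\<dots> = g * (B * (C * B))"
    using c assoc_mult_mat[OF g mult_carrier_mat[OF B C] B] assoc_mult_mat[OF B C B] by simp
  finally show "B' * (C' * g * B) = g * B" using CB gB B by simp
  have "(C' * g * B) * C = C' * (g * (B * C))"
    using assoc_mult_mat[OF C'g B C] assoc_mult_mat[OF C' g mult_carrier_mat[OF B C]] by simp
  also have "\<dots> = (C' * B') * (C' * g)"
    using c assoc_mult_mat[OF C' mult_carrier_mat[OF B' C'] g] assoc_mult_mat[OF C' B' C']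
      assoc_mult_mat[OF C' B' C'g] assoc_mult_mat[OF B' C' g] by simp
  finally show "(C' * g * B) * C = C' * g" using CB' left_mult_one_mat[OF C'g] by simp
qed

text \<open>The summand of \<open>V\<close> cut out by an idempotent endomorphism with pointwise factorizations
  \<open>B i * C i\<close>, \<open>C i * B i = 1\<close>, written in the coordinates given by \<open>C\<close>.\<close>

definition zz_retract :: "('a::field) zz \<Rightarrow> (int \<Rightarrow> nat) \<Rightarrow> (int \<Rightarrow> 'a mat) \<Rightarrow> (int \<Rightarrow> 'a mat) \<Rightarrow> 'a zz"
  where "zz_retract V r B C = \<lparr>zdim = r, zg = (\<lambda>i. C (i - 1) * zg V i * B i),
    zf = (\<lambda>i. C (i + 1) * zf V i * B i)\<rparr>"

lemma zdim_zz_retract[simp]: "zdim (zz_retract V r B C) = r"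
  unfolding zz_retract_def by simp

lemma not_zz_zero_retract:
  assumes "B i \<in> carrier_mat (zdim V i) (r i)" and "C i \<in> carrier_mat (r i) (zdim V i)"
    and "B i * C i \<noteq> 0\<^sub>m (zdim V i) (zdim V i)"
  shows "\<not> zz_zero (zz_retract V r B C)"
proof
  assume "zz_zero (zz_retract V r B C)"
  then have "r i = 0" unfolding zz_zero_def by simp
  then show False using assms mult_zero_dim_mat by force
qed

context
  fixes V :: "'a::field zz" and B C :: "int \<Rightarrow> 'a mat" and r :: "int \<Rightarrow> nat"
  assumes V: "zz_module V"
    and B: "\<And>i. B i \<in> carrier_mat (zdim V i) (r i)" and C: "\<And>i. C i \<in> carrier_mat (r i) (zdim V i)"
    and CB: "\<And>i. C i * B i = 1\<^sub>m (r i)" and BC: "zz_hom V V (\<lambda>i. B i * C i)"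
begin

lemma zz_module_retract: "zz_module (zz_retract V r B C)"
  unfolding zz_module_def zz_retract_def
  using mult_carrier_mat[OF mult_carrier_mat[OF C zz_moduleD(1)[OF V]] B]
    mult_carrier_mat[OF mult_carrier_mat[OF C zz_moduleD(2)[OF V]] B] by simp

lemma zz_hom_retract_incl: "zz_hom (zz_retract V r B C) V B"
  unfolding zz_hom_def zz_retract_def
  using B retract_intertwines(1)[OF B C CB B C CB zz_moduleD(1)[OF V] zz_homD(2)[OF BC]]
    retract_intertwines(1)[OF B C CB B C CB zz_moduleD(2)[OF V] zz_homD(3)[OF BC]]
  by simp

lemma zz_hom_retract_proj: "zz_hom V (zz_retract V r B C) C"
  unfolding zz_hom_def zz_retract_def
  using C retract_intertwines(2)[OF B C CB B C CB zz_moduleD(1)[OF V] zz_homD(2)[OF BC]]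
    retract_intertwines(2)[OF B C CB B C CB zz_moduleD(2)[OF V] zz_homD(3)[OF BC]]
  by simp

end

lemma factorization_cross_zero:
  fixes C1 :: "'a::semiring_1 mat"
  assumes B1: "B1 \<in> carrier_mat n r1" and C1: "C1 \<in> carrier_mat r1 n" and CB1: "C1 * B1 = 1\<^sub>m r1"
    and B2: "B2 \<in> carrier_mat n r2" and C2: "C2 \<in> carrier_mat r2 n" and CB2: "C2 * B2 = 1\<^sub>m r2"
    and orth: "(B1 * C1) * (B2 * C2) = 0\<^sub>m n n"
  shows "C1 * B2 = 0\<^sub>m r1 r2"
proof -
  have E: "B1 * C1 \<in> carrier_mat n n" and G: "B2 * C2 \<in> carrier_mat n n" using B1 C1 B2 C2 by auto
  have "C1 * (B1 * C1) = C1" using assoc_mult_mat[OF C1 B1 C1, symmetric] CB1 C1 by simp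
  moreover have "(B2 * C2) * B2 = B2" using assoc_mult_mat[OF B2 C2 B2] CB2 B2 by simp
  ultimately have "C1 * B2 = (C1 * (B1 * C1)) * ((B2 * C2) * B2)" by simp
  also have "\<dots> = C1 * (((B1 * C1) * (B2 * C2)) * B2)"
    using assoc_mult_mat[OF C1 E mult_carrier_mat[OF G B2]] assoc_mult_mat[OF E G B2] by simp
  finally show ?thesis using orth C1 B2 by simp
qed

lemma zz_iso_sum_retracts:
  assumes V: "zz_module V"
    and B1: "\<And>i. B1 i \<in> carrier_mat (zdim V i) (r1 i)" and C1: "\<And>i. C1 i \<in> carrier_mat (r1 i) (zdim V i)"
    and CB1: "\<And>i. C1 i * B1 i = 1\<^sub>m (r1 i)" and E1: "zz_hom V V (\<lambda>i. B1 i * C1 i)"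
    and B2: "\<And>i. B2 i \<in> carrier_mat (zdim V i) (r2 i)" and C2: "\<And>i. C2 i \<in> carrier_mat (r2 i) (zdim V i)"
    and CB2: "\<And>i. C2 i * B2 i = 1\<^sub>m (r2 i)" and E2: "zz_hom V V (\<lambda>i. B2 i * C2 i)"
    and sum: "\<And>i. B1 i * C1 i + B2 i * C2 i = 1\<^sub>m (zdim V i)"
    and orth12: "\<And>i. (B1 i * C1 i) * (B2 i * C2 i) = 0\<^sub>m (zdim V i) (zdim V i)"
    and orth21: "\<And>i. (B2 i * C2 i) * (B1 i * C1 i) = 0\<^sub>m (zdim V i) (zdim V i)"
  shows "zz_iso V (zz_sum (zz_retract V r1 B1 C1) (zz_retract V r2 B2 C2))"
proof -
  note U = zz_module_retract[OF V B1 C1 CB1 E1] and W = zz_module_retract[OF V B2 C2 CB2 E2]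
  define \<Phi> where "\<Phi> i = C1 i @\<^sub>r C2 i" for i
  define \<Psi> where "\<Psi> i = B1 i @\<^sub>c B2 i" for i
  have "zz_hom V (zz_sum (zz_retract V r1 B1 C1) (zz_retract V r2 B2 C2)) \<Phi>"
    unfolding \<Phi>_def by (rule zz_hom_append_rows[OF V U W zz_hom_retract_proj[OF V B1 C1 CB1 E1]
          zz_hom_retract_proj[OF V B2 C2 CB2 E2]])
  moreover have "zz_hom (zz_sum (zz_retract V r1 B1 C1) (zz_retract V r2 B2 C2)) V \<Psi>"
    unfolding \<Psi>_def by (rule zz_hom_append_cols[OF V U W zz_hom_retract_incl[OF V B1 C1 CB1 E1]
          zz_hom_retract_incl[OF V B2 C2 CB2 E2]])
  moreover have "\<Psi> i * \<Phi> i = 1\<^sub>m (zdim V i)" for i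
    unfolding \<Phi>_def \<Psi>_def using append_cols_mult_append_rows[OF B1 B2 C1 C2] sum by simp
  moreover have "\<Phi> i * \<Psi> i = 1\<^sub>m (zdim (zz_sum (zz_retract V r1 B1 C1) (zz_retract V r2 B2 C2)) i)" for i
    unfolding \<Phi>_def \<Psi>_def
    using append_rows_mult_append_cols[OF C1 C2 B1 B2] CB1 CB2
      factorization_cross_zero[OF B1 C1 CB1 B2 C2 CB2 orth12]
      factorization_cross_zero[OF B2 C2 CB2 B1 C1 CB1 orth21] by simp
  ultimately show ?thesis unfolding zz_iso_def by blast
qed

lemma zz_decomposable_of_idempotent:
  assumes V: "zz_module V" and E: "zz_idempotent V E"
    and nonzero: "E i \<noteq> 0\<^sub>m (zdim V i) (zdim V i)" and nonone: "E j \<noteq> 1\<^sub>m (zdim V j)"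
  shows "zz_decomposable V"
proof -
  have hom: "zz_hom V V E" and EE: "\<And>i. E i * E i = E i"
    using E unfolding zz_idempotent_def by auto
  note Ec = zz_homD(1)[OF hom]
  obtain r1 B1 C1 where B1: "\<And>i. B1 i \<in> carrier_mat (zdim V i) (r1 i)"
    and C1: "\<And>i. C1 i \<in> carrier_mat (r1 i) (zdim V i)" and CB1: "\<And>i. C1 i * B1 i = 1\<^sub>m (r1 i)"
    and BC1: "\<And>i. B1 i * C1 i = E i"
    using zz_idempotent_factor[OF E] by metis
  obtain r2 B2 C2 where B2: "\<And>i. B2 i \<in> carrier_mat (zdim V i) (r2 i)"
    and C2: "\<And>i. C2 i \<in> carrier_mat (r2 i) (zdim V i)" and CB2: "\<And>i. C2 i * B2 i = 1\<^sub>m (r2 i)"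
    and BC2: "\<And>i. B2 i * C2 i = 1\<^sub>m (zdim V i) - E i"
    using zz_idempotent_factor[OF zz_idempotent_one_minus[OF V E]] by metis
  have E1: "zz_hom V V (\<lambda>i. B1 i * C1 i)" unfolding BC1 by (rule hom)
  have E2: "zz_hom V V (\<lambda>i. B2 i * C2 i)"
    using zz_idempotent_one_minus[OF V E] unfolding BC2 zz_idempotent_def by (rule conjunct1)
  have sum: "B1 i * C1 i + B2 i * C2 i = 1\<^sub>m (zdim V i)" for i
    unfolding BC1 BC2 using Ec[of i] by (intro eq_matI) auto
  have "zz_iso V (zz_sum (zz_retract V r1 B1 C1) (zz_retract V r2 B2 C2))"
    by (rule zz_iso_sum_retracts[OF V B1 C1 CB1 E1 B2 C2 CB2 E2 sum])
      (simp_all add: BC1 BC2 idempotent_mat_mult_one_minus[OF Ec EE])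
  moreover have "\<not> zz_zero (zz_retract V r1 B1 C1)"
    using not_zz_zero_retract[where B = B1 and C = C1 and r = r1, OF B1 C1] nonzero BC1 by simp
  moreover have "1\<^sub>m (zdim V j) - E j \<noteq> 0\<^sub>m (zdim V j) (zdim V j)"
    using minus_eq_zero_matD[OF one_carrier_mat Ec] nonone by blast
  then have "\<not> zz_zero (zz_retract V r2 B2 C2)"
    using not_zz_zero_retract[where B = B2 and C = C2 and r = r2, OF B2 C2] BC2 by simp
  ultimately show ?thesis
    unfolding zz_decomposable_def
    using zz_module_retract[OF V B1 C1 CB1 E1] zz_module_retract[OF V B2 C2 CB2 E2] by blast
qed

lemma conj_idempotent_mat:
  fixes P :: "'a::semiring_1 mat"
  assumes \<psi>: "\<psi> \<in> carrier_mat d s" and P: "P \<in> carrier_mat s s" and \<phi>: "\<phi> \<in> carrier_mat s d"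
    and right_inv: "\<phi> * \<psi> = 1\<^sub>m s" and PP: "P * P = P"
  shows "(\<psi> * (P * \<phi>)) * (\<psi> * (P * \<phi>)) = \<psi> * (P * \<phi>)" and "\<phi> * (\<psi> * (P * \<phi>)) * \<psi> = P"
proof -
  have Pphi: "P * \<phi> \<in> carrier_mat s d" using P \<phi> by simp
  have recover: "\<phi> * (\<psi> * (P * \<phi>)) = P * \<phi>"
    using assoc_mult_mat[OF \<phi> \<psi> Pphi, symmetric] right_inv left_mult_one_mat[OF Pphi] by simp
  have "(\<psi> * (P * \<phi>)) * (\<psi> * (P * \<phi>)) = \<psi> * (P * (\<phi> * (\<psi> * (P * \<phi>))))"
    using assoc_mult_mat[OF \<psi> Pphi mult_carrier_mat[OF \<psi> Pphi]]
      assoc_mult_mat[OF P \<phi> mult_carrier_mat[OF \<psi> Pphi]] by simp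
  also have "\<dots> = \<psi> * ((P * P) * \<phi>)" using recover assoc_mult_mat[OF P P \<phi>] by simp
  finally show "(\<psi> * (P * \<phi>)) * (\<psi> * (P * \<phi>)) = \<psi> * (P * \<phi>)" using PP by simp
  show "\<phi> * (\<psi> * (P * \<phi>)) * \<psi> = P"
    using recover assoc_mult_mat[OF P \<phi> \<psi>] right_inv P by simp
qed

lemma zz_idempotent_conj:
  assumes V: "zz_module V" and S: "zz_module S"
    and \<phi>: "zz_hom V S \<phi>" and \<psi>: "zz_hom S V \<psi>" and inv: "\<And>i. \<phi> i * \<psi> i = 1\<^sub>m (zdim S i)"
    and P: "zz_idempotent S P"
  shows "zz_idempotent V (\<lambda>i. \<psi> i * (P i * \<phi> i))"
proof -
  have Phom: "zz_hom S S P" and PP: "\<And>i. P i * P i = P i" using P unfolding zz_idempotent_def by auto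
  have "zz_hom V V (\<lambda>i. \<psi> i * (P i * \<phi> i))"
    using zz_hom_comp[OF V S V zz_hom_comp[OF V S S \<phi> Phom] \<psi>] .
  then show ?thesis
    unfolding zz_idempotent_def
    using conj_idempotent_mat(1)[OF zz_homD(1)[OF \<psi>] zz_homD(1)[OF Phom] zz_homD(1)[OF \<phi>] inv PP]
    by blast
qed

lemma zz_idempotent_of_decomposable:
  assumes V: "zz_module V" and dec: "zz_decomposable V"
  obtains E i j where "zz_idempotent V E"
    "E i \<noteq> 0\<^sub>m (zdim V i) (zdim V i)" "E j \<noteq> 1\<^sub>m (zdim V j)"
proof -
  obtain U W where U: "zz_module U" and W: "zz_module W" and U0: "\<not> zz_zero U" and W0: "\<not> zz_zero W"
    and "zz_iso V (zz_sum U W)" using dec unfolding zz_decomposable_def by blast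
  then obtain \<phi> \<psi> where \<phi>: "zz_hom V (zz_sum U W) \<phi>" and \<psi>: "zz_hom (zz_sum U W) V \<psi>"
    and left_inv: "\<And>i. \<psi> i * \<phi> i = 1\<^sub>m (zdim V i)" and right_inv: "\<And>i. \<phi> i * \<psi> i = 1\<^sub>m (zdim (zz_sum U W) i)"
    unfolding zz_iso_def by blast
  define P :: "int \<Rightarrow> 'a mat" where "P i = four_block_mat (1\<^sub>m (zdim U i)) (0\<^sub>m (zdim U i) (zdim W i))
    (0\<^sub>m (zdim W i) (zdim U i)) (0\<^sub>m (zdim W i) (zdim W i))" for i
  define E where "E i = \<psi> i * (P i * \<phi> i)" for i
  have P: "zz_idempotent (zz_sum U W) P" unfolding P_def by (rule zz_idempotent_sum_first[OF U W])
  have Pc: "P i \<in> carrier_mat (zdim (zz_sum U W) i) (zdim (zz_sum U W) i)" for i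
    using P zz_homD(1) unfolding zz_idempotent_def by blast
  have E: "zz_idempotent V E"
    unfolding E_def by (rule zz_idempotent_conj[OF V zz_module_sum[OF U W] \<phi> \<psi> right_inv P])
  have recover: "\<phi> i * E i * \<psi> i = P i" for i
    unfolding E_def using P unfolding zz_idempotent_def
    by (blast intro: conj_idempotent_mat(2)[OF zz_homD(1)[OF \<psi>] Pc zz_homD(1)[OF \<phi>] right_inv])
  obtain i where i: "zdim U i \<noteq> 0" using U0 unfolding zz_zero_def by blast
  obtain j where j: "zdim W j \<noteq> 0" using W0 unfolding zz_zero_def by blast
  have "E i \<noteq> 0\<^sub>m (zdim V i) (zdim V i)"
  proof
    assume "E i = 0\<^sub>m (zdim V i) (zdim V i)"
    then have "P i = 0\<^sub>m (zdim (zz_sum U W) i) (zdim (zz_sum U W) i)"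
      using recover[of i] zz_homD(1)[OF \<phi>, of i] zz_homD(1)[OF \<psi>, of i] by simp
    then have "P i $$ (0, 0) = 0" using i by simp
    moreover have "P i $$ (0, 0) = 1" using i unfolding P_def by simp
    ultimately show False by simp
  qed
  moreover have "E j \<noteq> 1\<^sub>m (zdim V j)"
  proof
    assume "E j = 1\<^sub>m (zdim V j)"
    then have "P j = 1\<^sub>m (zdim (zz_sum U W) j)"
      using recover[of j] zz_homD(1)[OF \<phi>, of j] right_inv[of j] by simp
    then have "P j $$ (zdim U j, zdim U j) = 1" using j by simp
    moreover have "P j $$ (zdim U j, zdim U j) = 0" using j unfolding P_def by simp
    ultimately show False by simp
  qed
  ultimately show ?thesis using that E by blast
qed

theorem lemma1:
  fixes V :: "('a::field) zz"
  assumes "zz_module V" and "\<not> zz_zero V"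
  shows "zz_indecomposable V \<longleftrightarrow> (\<forall>k::int. k \<ge> 0 \<longrightarrow> zz_interval_indecomposable V (- k) k)"
proof
  assume ind: "zz_indecomposable V"
  show "\<forall>k::int. k \<ge> 0 \<longrightarrow> zz_interval_indecomposable V (- k) k"
    unfolding zz_interval_indecomposable_def
  proof (intro allI impI conjI)
    fix k :: int and S1 S2 assume "zz_internal_decomp V S1 S2"
    then obtain E where E: "zz_idempotent V E"
      and S1: "\<And>i. E i = 0\<^sub>m (zdim V i) (zdim V i) \<Longrightarrow> S1 i = {0\<^sub>v (zdim V i)}"
      and S2: "\<And>i. E i = 1\<^sub>m (zdim V i) \<Longrightarrow> S2 i = {0\<^sub>v (zdim V i)}"
      using zz_idempotent_of_internal_decomp[OF assms(1)] by metis
    have "(\<forall>i. E i = 0\<^sub>m (zdim V i) (zdim V i)) \<or> (\<forall>j. E j = 1\<^sub>m (zdim V j))"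
      using zz_decomposable_of_idempotent[OF assms(1) E] ind unfolding zz_indecomposable_def by blast
    then show "(\<forall>i\<in>{- k..k}. S1 i = {0\<^sub>v (zdim V i)}) \<or> (\<forall>i\<in>{- k..k}. S2 i = {0\<^sub>v (zdim V i)})"
      using S1 S2 by blast
  qed (rule assms(2))
next
  assume interval: "\<forall>k::int. k \<ge> 0 \<longrightarrow> zz_interval_indecomposable V (- k) k"
  show "zz_indecomposable V"
    unfolding zz_indecomposable_def
  proof
    assume "zz_decomposable V"
    then obtain E i j where E: "zz_idempotent V E"
      and i: "E i \<noteq> 0\<^sub>m (zdim V i) (zdim V i)" and j: "E j \<noteq> 1\<^sub>m (zdim V j)"
      using zz_idempotent_of_decomposable[OF assms(1)] by metis
    obtain S1 S2 where D: "zz_internal_decomp V S1 S2"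
      and "S1 i \<noteq> {0\<^sub>v (zdim V i)}" "S2 j \<noteq> {0\<^sub>v (zdim V j)}"
      using zz_internal_decomp_of_idempotent[OF assms(1) E] i j by metis
    moreover define k where "k = max \<bar>i\<bar> \<bar>j\<bar>"
    then have "i \<in> {-k..k}" "j \<in> {-k..k}" and "zz_interval_indecomposable V (- k) k"
      using interval by auto
    ultimately show False unfolding zz_interval_indecomposable_def by blast
  qed
qed

end
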